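(* Let $N$ be a finite set and $F:2^N\to\mathbb{R}$. Then $F$ is quasi-submodular if and only if $F$ satisfies the single sub-crossing property.
   Context: For $A\subseteq N$, $i\in N$, write $A+i=A\cup\{i\}$. $F$ is quasi-submodular if for all $X,Y\subseteq N$ both hold: $F(X\cap Y)\ge F(X)\Rightarrow F(Y)\ge F(X\cup Y)$, and $F(X\cap Y)>F(X)\Rightarrow F(Y)>F(X\cup Y)$. $F$ satisfies the single sub-crossing property if for all $A\subseteq B\subseteq N$ and $i\in N\setminus B$ both hold: $F(A)\ge F(B)\Rightarrow F(A+i)\ge F(B+i)$, and $F(A)>F(B)\Rightarrow F(A+i)>F(B+i)$. *)

theory Defs
  imports Complex_Main
begin

definition quasi_submodular :: "'a set \<Rightarrow> ('a set \<Rightarrow> real) \<Rightarrow> bool" where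
  "quasi_submodular N F \<longleftrightarrow>
     (\<forall>X Y. X \<subseteq> N \<longrightarrow> Y \<subseteq> N \<longrightarrow>
        (F (X \<inter> Y) \<ge> F X \<longrightarrow> F Y \<ge> F (X \<union> Y)) \<and>
        (F (X \<inter> Y) > F X \<longrightarrow> F Y > F (X \<union> Y)))"

definition single_sub_crossing :: "'a set \<Rightarrow> ('a set \<Rightarrow> real) \<Rightarrow> bool" where
  "single_sub_crossing N F \<longleftrightarrow>
     (\<forall>A B i. A \<subseteq> B \<longrightarrow> B \<subseteq> N \<longrightarrow> i \<in> N - B \<longrightarrow>
        (F A \<ge> F B \<longrightarrow> F (insert i A) \<ge> F (insert i B)) \<and>
        (F A > F B \<longrightarrow> F (insert i A) > F (insert i B)))"

end

theory Submission
  imports Defs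
begin

text \<open>Taking \<open>X = A + i\<close> and \<open>Y = B\<close> in quasi-submodularity gives the single sub-crossing
property. Conversely, passing from \<open>X \<inter> Y \<subseteq> X\<close> to \<open>Y \<subseteq> X \<union> Y\<close> amounts to adding the
elements of \<open>Y - X\<close> one at a time to both sets, and each single addition preserves the
(strict and weak) comparison by the single sub-crossing property; this is where the
finiteness of \<open>N\<close> enters.\<close>

lemma quasi_submodular_imp_single_sub_crossing:
  assumes "quasi_submodular N F"
  shows "single_sub_crossing N F"
  unfolding single_sub_crossing_def
proof (intro allI impI)
  fix A B i
  assume "A \<subseteq> B" "B \<subseteq> N" "i \<in> N - B"
  then have "insert i A \<subseteq> N" "insert i A \<inter> B = A" "insert i A \<union> B = insert i B"
    by auto
  with assms \<open>B \<subseteq> N\<close>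
  show "(F A \<ge> F B \<longrightarrow> F (insert i A) \<ge> F (insert i B)) \<and>
        (F A > F B \<longrightarrow> F (insert i A) > F (insert i B))"
    unfolding quasi_submodular_def by (metis inf_commute sup_commute)
qed

lemma single_sub_crossing_union:
  assumes "single_sub_crossing N F" and "finite D"
    and "D \<subseteq> N" "D \<inter> B = {}" "A \<subseteq> B" "B \<subseteq> N"
  shows "(F A \<ge> F B \<longrightarrow> F (A \<union> D) \<ge> F (B \<union> D)) \<and>
         (F A > F B \<longrightarrow> F (A \<union> D) > F (B \<union> D))"
  using \<open>finite D\<close> \<open>D \<subseteq> N\<close> \<open>D \<inter> B = {}\<close>
proof (induction D rule: finite_induct)
  case empty
  then show ?case by simp
next
  case (insert x D)
  then have IH: "(F A \<ge> F B \<longrightarrow> F (A \<union> D) \<ge> F (B \<union> D)) \<and>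
                 (F A > F B \<longrightarrow> F (A \<union> D) > F (B \<union> D))"
    by auto
  have "A \<union> D \<subseteq> B \<union> D" "B \<union> D \<subseteq> N" "x \<in> N - (B \<union> D)"
    using insert.hyps(2) insert.prems \<open>A \<subseteq> B\<close> \<open>B \<subseteq> N\<close> by auto
  with assms(1) have
    "(F (A \<union> D) \<ge> F (B \<union> D) \<longrightarrow> F (insert x (A \<union> D)) \<ge> F (insert x (B \<union> D))) \<and>
     (F (A \<union> D) > F (B \<union> D) \<longrightarrow> F (insert x (A \<union> D)) > F (insert x (B \<union> D)))"
    unfolding single_sub_crossing_def by blast
  with IH show ?case by simp
qed

lemma single_sub_crossing_imp_quasi_submodular:
  assumes "finite N" and "single_sub_crossing N F"
  shows "quasi_submodular N F"
  unfolding quasi_submodular_def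
proof (intro allI impI)
  fix X Y
  assume "X \<subseteq> N" "Y \<subseteq> N"
  then have "finite (Y - X)"
    using \<open>finite N\<close> finite_subset by blast
  from single_sub_crossing_union[OF assms(2) this, of X "X \<inter> Y"] \<open>X \<subseteq> N\<close> \<open>Y \<subseteq> N\<close>
  have "(F (X \<inter> Y) \<ge> F X \<longrightarrow> F (X \<inter> Y \<union> (Y - X)) \<ge> F (X \<union> (Y - X))) \<and>
        (F (X \<inter> Y) > F X \<longrightarrow> F (X \<inter> Y \<union> (Y - X)) > F (X \<union> (Y - X)))"
    by auto
  moreover have "X \<inter> Y \<union> (Y - X) = Y" "X \<union> (Y - X) = X \<union> Y"
    by auto
  ultimately show "(F (X \<inter> Y) \<ge> F X \<longrightarrow> F Y \<ge> F (X \<union> Y)) \<and>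
                   (F (X \<inter> Y) > F X \<longrightarrow> F Y > F (X \<union> Y))"
    by simp
qed

theorem proposition2:
  fixes N :: "'a set" and F :: "'a set \<Rightarrow> real"
  assumes "finite N"
  shows "quasi_submodular N F \<longleftrightarrow> single_sub_crossing N F"
  using quasi_submodular_imp_single_sub_crossing
    single_sub_crossing_imp_quasi_submodular[OF assms] by blast

end
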